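(* Let $M$ be a nonempty Hausdorff space and $\sigma:\mathbb{R}\to\mathcal{T}(M)$ a spectral family in $\mathcal{T}(M)$, with admissible domain $\mathcal{D}(\sigma)$ and induced function $f_\sigma:\mathcal{D}(\sigma)\to\mathbb{R}$. Then $sp(\sigma)=\overline{f_\sigma(\mathcal{D}(\sigma))}$.
   Context: $\mathcal{T}(M)$ is the complete lattice of open subsets of $M$ with $\bigvee_k U_k=\bigcup_k U_k$ and $\bigwedge_k U_k=\mathrm{int}(\bigcap_k U_k)$. A spectral family in $\mathcal{T}(M)$ is a map $\sigma:\mathbb{R}\to\mathcal{T}(M)$ with $\sigma(\lambda)\subseteq\sigma(\mu)$ for $\lambda\le\mu$, $\sigma(\lambda)=\mathrm{int}\bigcap_{\mu>\lambda}\sigma(\mu)$ for all $\lambda$, $\mathrm{int}\bigcap_\lambda\sigma(\lambda)=\emptyset$ and $\bigcup_\lambda\sigma(\lambda)=M$. The admissible domain is $\mathcal{D}(\sigma):=M\setminus\bigcap_{\lambda\in\mathbb{R}}\sigma(\lambda)$, and $f_\sigma(x):=\inf\{\lambda : x\in\sigma(\lambda)\}$ for $x\in\mathcal{D}(\sigma)$. The resolvent set $R(\sigma)$ is the set of $\lambda\in\mathbb{R}$ such that $\sigma$ is constant on a neighbourhood of $\lambda$, and $sp(\sigma):=\mathbb{R}\setminus R(\sigma)$. *)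

theory Defs
  imports "HOL-Analysis.Analysis"
begin

text \<open>Spectral families in the lattice of open subsets of a topological space M
(here the type 'a, with M = UNIV). Meets are interiors of intersections.\<close>

definition spectral_family :: "(real \<Rightarrow> 'a::topological_space set) \<Rightarrow> bool" where
  "spectral_family \<sigma> \<longleftrightarrow>
     (\<forall>l. open (\<sigma> l)) \<and>
     (\<forall>l m. l \<le> m \<longrightarrow> \<sigma> l \<subseteq> \<sigma> m) \<and>
     (\<forall>l. \<sigma> l = interior (\<Inter>m\<in>{l<..}. \<sigma> m)) \<and>
     interior (\<Inter>l. \<sigma> l) = {} \<and>
     (\<Union>l. \<sigma> l) = UNIV"

definition adm_domain :: "(real \<Rightarrow> 'a set) \<Rightarrow> 'a set" where
  "adm_domain \<sigma> = UNIV - (\<Inter>l. \<sigma> l)"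

definition f_sigma :: "(real \<Rightarrow> 'a set) \<Rightarrow> 'a \<Rightarrow> real" where
  "f_sigma \<sigma> x = Inf {l. x \<in> \<sigma> l}"

definition resolvent_set :: "(real \<Rightarrow> 'a set) \<Rightarrow> real set" where
  "resolvent_set \<sigma> =
     {l. \<exists>U. open U \<and> l \<in> U \<and> (\<forall>m\<in>U. \<sigma> m = \<sigma> l)}"

definition spectrum_sf :: "(real \<Rightarrow> 'a set) \<Rightarrow> real set" where
  "spectrum_sf \<sigma> = UNIV - resolvent_set \<sigma>"

end

theory Submission
  imports Defs
begin

text \<open>Only monotonicity of \<sigma> and \<open>\<Union>l. \<sigma> l = M\<close> are needed. For \<open>x\<close> in the admissible domain,
  the level set \<open>{l. x \<in> \<sigma> l}\<close> is an up-closed nonempty set bounded below, so \<open>x \<in> \<sigma> l\<close> whenever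
  \<open>l > f\<^sub>\<sigma> x\<close> and \<open>x \<notin> \<sigma> l\<close> whenever \<open>l < f\<^sub>\<sigma> x\<close>. Hence \<sigma> cannot be constant near a value
  \<open>f\<^sub>\<sigma> x\<close>, so the range of \<open>f\<^sub>\<sigma>\<close> lies in the closed set \<open>sp(\<sigma>)\<close>. Conversely, on an interval
  free of values of \<open>f\<^sub>\<sigma>\<close> every point of \<open>\<sigma> m'\<close> already lies in \<open>\<sigma> m\<close> for the smaller end
  point \<open>m\<close>, so \<sigma> is constant on every neighbourhood of a point outside the closure of the
  range.\<close>

lemma spectral_family_mono: "spectral_family \<sigma> \<Longrightarrow> mono \<sigma>"
  unfolding spectral_family_def by (blast intro: monoI)

lemma spectral_family_Union: "spectral_family \<sigma> \<Longrightarrow> (\<Union>l. \<sigma> l) = UNIV"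
  unfolding spectral_family_def by blast

lemma bdd_below_levels:
  assumes "mono \<sigma>" and "x \<in> adm_domain \<sigma>"
  shows "bdd_below {l. x \<in> \<sigma> l}"
proof -
  obtain l0 where l0: "x \<notin> \<sigma> l0"
    using assms(2) unfolding adm_domain_def by blast
  have "l0 \<le> l" if "x \<in> \<sigma> l" for l
    using l0 that monoD[OF assms(1), of l l0] by (metis linear subsetD)
  then show ?thesis
    by (intro bdd_belowI) simp
qed

lemma f_sigma_le:
  assumes "mono \<sigma>" and "x \<in> adm_domain \<sigma>" and "x \<in> \<sigma> l"
  shows "f_sigma \<sigma> x \<le> l"
  unfolding f_sigma_def using assms by (intro cInf_lower bdd_below_levels) auto

lemma mem_if_f_sigma_less:
  assumes "mono \<sigma>" and "(\<Union>l. \<sigma> l) = UNIV" and "x \<in> adm_domain \<sigma>"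
    and "f_sigma \<sigma> x < l"
  shows "x \<in> \<sigma> l"
proof -
  have "{l. x \<in> \<sigma> l} \<noteq> {}"
    using assms(2) by blast
  then obtain l' where "x \<in> \<sigma> l'" "l' < l"
    using assms(4) cInf_less_iff[OF _ bdd_below_levels[OF assms(1,3)]]
    unfolding f_sigma_def by auto
  then show ?thesis
    using monoD[OF assms(1), of l' l] by auto
qed

lemma open_resolvent_set: "open (resolvent_set \<sigma>)"
proof (rule Topological_Spaces.openI)
  fix l assume "l \<in> resolvent_set \<sigma>"
  then obtain U where U: "open U" "l \<in> U" "\<forall>m\<in>U. \<sigma> m = \<sigma> l"
    unfolding resolvent_set_def by blast
  have "U \<subseteq> resolvent_set \<sigma>"
  proof
    fix m assume "m \<in> U"
    with U(3) have "\<forall>m'\<in>U. \<sigma> m' = \<sigma> m"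
      by simp
    with U(1) \<open>m \<in> U\<close> show "m \<in> resolvent_set \<sigma>"
      unfolding resolvent_set_def by blast
  qed
  with U show "\<exists>T. open T \<and> l \<in> T \<and> T \<subseteq> resolvent_set \<sigma>"
    by blast
qed

lemma closed_spectrum_sf: "closed (spectrum_sf \<sigma>)"
  unfolding spectrum_sf_def using closed_Compl[OF open_resolvent_set] by (simp add: Compl_eq_Diff_UNIV)

lemma f_sigma_in_spectrum_sf:
  assumes "mono \<sigma>" and "(\<Union>l. \<sigma> l) = UNIV" and x: "x \<in> adm_domain \<sigma>"
  shows "f_sigma \<sigma> x \<in> spectrum_sf \<sigma>"
proof (rule ccontr)
  define y where "y = f_sigma \<sigma> x"
  assume "f_sigma \<sigma> x \<notin> spectrum_sf \<sigma>"
  then obtain U where "open U" "y \<in> U" and const: "\<forall>m\<in>U. \<sigma> m = \<sigma> y"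
    unfolding spectrum_sf_def resolvent_set_def y_def by blast
  then obtain e where e: "e > 0" "ball y e \<subseteq> U"
    by (meson openE)
  then have "y + e/2 \<in> U" "y - e/2 \<in> U"
    by (auto simp: dist_real_def)
  then have "\<sigma> (y + e/2) = \<sigma> (y - e/2)"
    using const by simp
  moreover have "x \<in> \<sigma> (y + e/2)"
    using mem_if_f_sigma_less[OF assms] e by (simp add: y_def)
  ultimately have "y \<le> y - e/2"
    using f_sigma_le[OF assms(1) x] by (simp add: y_def)
  with e show False
    by simp
qed

lemma sigma_eq_if_no_f_sigma_between:
  assumes "mono \<sigma>" and "(\<Union>l. \<sigma> l) = UNIV" and "m \<le> m'"
    and gap: "f_sigma \<sigma> ` adm_domain \<sigma> \<inter> {m..m'} = {}"
  shows "\<sigma> m = \<sigma> m'"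
proof
  show "\<sigma> m \<subseteq> \<sigma> m'"
    using monoD[OF assms(1,3)] .
  show "\<sigma> m' \<subseteq> \<sigma> m"
  proof
    fix x assume x: "x \<in> \<sigma> m'"
    show "x \<in> \<sigma> m"
    proof (cases "x \<in> adm_domain \<sigma>")
      case False
      then show ?thesis
        unfolding adm_domain_def by blast
    next
      case True
      then have "f_sigma \<sigma> x \<notin> {m..m'}"
        using gap by blast
      with f_sigma_le[OF assms(1) True x] have "f_sigma \<sigma> x < m"
        by auto
      then show ?thesis
        using mem_if_f_sigma_less[OF assms(1,2) True] by blast
    qed
  qed
qed

lemma spectrum_sf_subset_closure_range:
  assumes "mono \<sigma>" and "(\<Union>l. \<sigma> l) = UNIV"
  shows "spectrum_sf \<sigma> \<subseteq> closure (f_sigma \<sigma> ` adm_domain \<sigma>)"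
proof
  fix y assume "y \<in> spectrum_sf \<sigma>"
  show "y \<in> closure (f_sigma \<sigma> ` adm_domain \<sigma>)"
  proof (rule ccontr)
    assume "y \<notin> closure (f_sigma \<sigma> ` adm_domain \<sigma>)"
    then obtain e where e: "e > 0" and far: "\<forall>z\<in>f_sigma \<sigma> ` adm_domain \<sigma>. \<not> dist z y < e"
      unfolding closure_approachable by blast
    have gap: "f_sigma \<sigma> ` adm_domain \<sigma> \<inter> {a..b} = {}"
      if "a \<in> ball y e" "b \<in> ball y e" for a b
    proof -
      have "dist z y < e" if "z \<in> {a..b}" for z
        using that \<open>a \<in> ball y e\<close> \<open>b \<in> ball y e\<close> by (auto simp: dist_real_def)
      then show ?thesis
        using far by blast
    qed
    have "\<sigma> m = \<sigma> y" if "m \<in> ball y e" for m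
    proof (cases "m \<le> y")
      case True
      then show ?thesis
        using sigma_eq_if_no_f_sigma_between[OF assms True] gap[of m y] that e by simp
    next
      case False
      then have "\<sigma> y = \<sigma> m"
        using sigma_eq_if_no_f_sigma_between[OF assms, of y m] gap[of y m] that e by simp
      then show ?thesis ..
    qed
    moreover have "open (ball y e)" "y \<in> ball y e"
      using e by auto
    ultimately have "y \<in> resolvent_set \<sigma>"
      unfolding resolvent_set_def by blast
    with \<open>y \<in> spectrum_sf \<sigma>\<close> show False
      unfolding spectrum_sf_def by blast
  qed
qed

theorem proposition2p33:
  fixes \<sigma> :: "real \<Rightarrow> 'a::t2_space set"
  assumes "spectral_family \<sigma>"
  shows "spectrum_sf \<sigma> = closure (f_sigma \<sigma> ` adm_domain \<sigma>)"
proof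
  note mono = spectral_family_mono[OF assms] and cover = spectral_family_Union[OF assms]
  show "spectrum_sf \<sigma> \<subseteq> closure (f_sigma \<sigma> ` adm_domain \<sigma>)"
    using spectrum_sf_subset_closure_range[OF mono cover] .
  show "closure (f_sigma \<sigma> ` adm_domain \<sigma>) \<subseteq> spectrum_sf \<sigma>"
    using f_sigma_in_spectrum_sf[OF mono cover] closed_spectrum_sf
    by (intro closure_minimal) auto
qed

end
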